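(* Let $\nu\in\mathcal P_s$ with $\nu(\{0\})=0$ and let $a>0$ with $\nu(\{a\})=0$. Then for all $n\ge1$, $$II(n,a,a)=G(a)^{n-1}\big[nH(a)+G(a)\big].$$
   Context: Fix $\alpha>0$. $\mathcal P_s$ is the set of symmetric Borel probability measures on $\mathbb R$. For $x\in\mathbb R$, $\widetilde\delta_x=\frac12(\delta_x+\delta_{-x})$. For a probability measure $\lambda=\mathcal L(X)$ and $c>0$, $T_c\lambda=\mathcal L(cX)$, and $T_0\lambda=\delta_0$. $\widetilde\pi_{2\alpha}$ is the symmetric Pareto probability measure with density $\alpha|y|^{-2\alpha-1}\mathbf 1_{\{|y|\ge1\}}$. The Kendall convolution $\vartriangle_\alpha$ on $\mathcal P_s$ is defined by $\widetilde\delta_x\vartriangle_\alpha\widetilde\delta_y=T_M\big(\varrho^\alpha\widetilde\pi_{2\alpha}+(1-\varrho^\alpha)\widetilde\delta_1\big)$ where $M=\max(|x|,|y|)$, $m=\min(|x|,|y|)$, $\varrho=m/M$ (and $\varrho=0$ if $M=0$), extended by $(\nu_1\vartriangle_\alpha\nu_2)(A)=\int\int(\widetilde\delta_x\vartriangle_\alpha\widetilde\delta_y)(A)\,\nu_1(dx)\nu_2(dy)$. For $x\in\mathbb R$ and $\mu\in\mathcal P_s$ we write $\delta_x\vartriangle_\alpha\mu:=\widetilde\delta_x\vartriangle_\alpha\mu$. $\Psi(t)=(1-|t|^\alpha)_+$. For the measure $\nu$: $F(t)=\nu((-\infty,t])$, $G(t)=\int_{\mathbb R}\Psi(x/t)\,\nu(dx)$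 for $t\neq0$, and for $t>0$, $H(t)=2F(t)-1-G(t)=t^{-\alpha}\int_{[-t,t]}|x|^\alpha\nu(dx)$. The Kendall random walk with step distribution $\nu$ is the Markov chain $(X_n)_{n\ge0}$ with $X_0=0$ and transition kernel $\mathbb P(X_{k+1}\in A\mid X_k=x)=(\delta_x\vartriangle_\alpha\nu)(A)$. For $a,t>0$ and $n\ge1$, $II(n,a,t)=\int_{(-\infty,a]}\cdots\int_{(-\infty,a]}\mathbf 1_{\{|x_n|<t\}}\,(\delta_{x_{n-1}}\vartriangle_\alpha\nu)(dx_n)\cdots(\delta_{x_1}\vartriangle_\alpha\nu)(dx_2)\,\nu(dx_1)$ ($n$ integrations), i.e. $II(n,a,t)=\mathbb P(X_1\le a,\dots,X_n\le a,\ |X_n|<t)$. *)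

theory Defs
  imports "HOL-Probability.Probability"
begin

definition sym_delta :: "real \<Rightarrow> real measure" where
  "sym_delta x = measure_of UNIV (sets borel)
     (\<lambda>A. (indicator A x + indicator A (-x)) / 2)"

definition sym_pareto :: "real \<Rightarrow> real measure" where
  "sym_pareto \<alpha> = density lborel
     (\<lambda>y. ennreal (if \<bar>y\<bar> \<ge> 1 then \<alpha> * \<bar>y\<bar> powr (- 2 * \<alpha> - 1) else 0))"

definition dil :: "real \<Rightarrow> real measure \<Rightarrow> real measure" where
  "dil c \<mu> = (if c = 0 then return borel 0 else distr \<mu> borel (\<lambda>x. c * x))"

definition mixture :: "real \<Rightarrow> real measure \<Rightarrow> real measure \<Rightarrow> real measure" where
  "mixture p \<mu> \<kappa> = measure_of UNIV (sets borel)
     (\<lambda>A. ennreal p * emeasure \<mu> A + ennreal (1 - p) * emeasure \<kappa> A)"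

definition kendall_pt :: "real \<Rightarrow> real \<Rightarrow> real \<Rightarrow> real measure" where
  "kendall_pt \<alpha> x y =
     (let M = max \<bar>x\<bar> \<bar>y\<bar>; m = min \<bar>x\<bar> \<bar>y\<bar>;
          \<rho> = (if M = 0 then 0 else m / M)
      in dil M (mixture (\<rho> powr \<alpha>) (sym_pareto \<alpha>) (sym_delta 1)))"

definition kendall_conv :: "real \<Rightarrow> real measure \<Rightarrow> real measure \<Rightarrow> real measure" where
  "kendall_conv \<alpha> \<nu>1 \<nu>2 = measure_of UNIV (sets borel)
     (\<lambda>A. \<integral>\<^sup>+ x. \<integral>\<^sup>+ y. emeasure (kendall_pt \<alpha> x y) A \<partial>\<nu>2 \<partial>\<nu>1)"

text \<open>Transition kernel of the Kendall random walk: delta_x conv nu := sym_delta x conv nu.\<close>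
definition kstep :: "real \<Rightarrow> real measure \<Rightarrow> real \<Rightarrow> real measure" where
  "kstep \<alpha> \<nu> x = kendall_conv \<alpha> (sym_delta x) \<nu>"

definition Psi :: "real \<Rightarrow> real \<Rightarrow> real" where
  "Psi \<alpha> t = max 0 (1 - \<bar>t\<bar> powr \<alpha>)"

definition cdfF :: "real measure \<Rightarrow> real \<Rightarrow> real" where
  "cdfF \<nu> t = measure \<nu> {..t}"

definition GG :: "real \<Rightarrow> real measure \<Rightarrow> real \<Rightarrow> real" where
  "GG \<alpha> \<nu> t = (\<integral>x. Psi \<alpha> (x / t) \<partial>\<nu>)"

definition HH :: "real \<Rightarrow> real measure \<Rightarrow> real \<Rightarrow> real" where
  "HH \<alpha> \<nu> t = t powr (- \<alpha>) * (\<integral>x. indicator {-t..t} x * \<bar>x\<bar> powr \<alpha> \<partial>\<nu>)"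

text \<open>Innermost-first integrands of II(n,a,t): W k x is the integral over the last k
  coordinates given the current position x (itself required to be <= a).\<close>
fun IIw :: "real \<Rightarrow> real measure \<Rightarrow> real \<Rightarrow> real \<Rightarrow> nat \<Rightarrow> real \<Rightarrow> ennreal" where
  "IIw \<alpha> \<nu> a t 0 x = indicator {..a} x * indicator {y. \<bar>y\<bar> < t} x"
| "IIw \<alpha> \<nu> a t (Suc k) x =
     indicator {..a} x * (\<integral>\<^sup>+ y. IIw \<alpha> \<nu> a t k y \<partial>(kstep \<alpha> \<nu> x))"

definition II :: "real \<Rightarrow> real measure \<Rightarrow> nat \<Rightarrow> real \<Rightarrow> real \<Rightarrow> ennreal" where
  "II \<alpha> \<nu> n a t = (\<integral>\<^sup>+ x. IIw \<alpha> \<nu> a t (n - 1) x \<partial>\<nu>)"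

end

theory Submission
  imports Defs
begin

text \<open>
  Write \<open>\<psi>(z) = \<Psi>(z/a)\<close> and \<open>\<phi>(z) = (|z|/a)^\<alpha> 1{|z| < a}\<close>, so that
  \<open>\<psi> + \<phi> = 1{|z| < a}\<close>, \<open>\<integral>\<psi> d\<nu> = G(a)\<close> and, since \<open>\<nu>{\<plusminus>a} = 0\<close>, \<open>\<integral>\<phi> d\<nu> = H(a)\<close>.
  Integrating against the symmetric Pareto density shows that the Kendall convolution acts on
  these two functions like a product rule:
  \<open>\<integral>\<psi> d(\<delta>\<^sub>x \<triangle> \<delta>\<^sub>y) = \<psi>(x)\<psi>(y)\<close> and \<open>\<integral>\<phi> d(\<delta>\<^sub>x \<triangle> \<delta>\<^sub>y) = \<phi>(x)\<psi>(y) + \<psi>(x)\<phi>(y)\<close>.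
  Hence the span of \<open>\<psi>\<close> and \<open>\<phi>\<close> is invariant under the transition kernel, and integrating
  out the walk from its last step, the integrand of \<open>II(n,a,a)\<close> with \<open>k\<close> steps left is
  \<open>A\<^sub>k \<psi> + G\<^sup>k \<phi>\<close> where \<open>A\<^sub>0 = 1\<close> and \<open>A\<^sub>k\<^sub>+\<^sub>1 = A\<^sub>k G + G\<^sup>k H\<close>.
  Therefore \<open>II(n,a,a) = A\<^sub>n = G\<^sup>n\<^sup>-\<^sup>1 (nH + G)\<close>.
\<close>

section \<open>Measures obtained by mixing a kernel\<close>

lemma
  fixes K :: "'b \<Rightarrow> 'a measure" and M :: "'b measure" and R :: "'a measure"
  defines "N \<equiv> measure_of (space R) (sets R) (\<lambda>A. \<integral>\<^sup>+y. emeasure (K y) A \<partial>M)"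
  assumes sets_K: "\<And>y. sets (K y) = sets R"
    and measurable_K: "\<And>f. f \<in> borel_measurable R \<Longrightarrow> (\<lambda>y. \<integral>\<^sup>+x. f x \<partial>K y) \<in> borel_measurable M"
  shows emeasure_measure_of_kernel: "A \<in> sets R \<Longrightarrow> emeasure N A = (\<integral>\<^sup>+y. emeasure (K y) A \<partial>M)"
    and nn_integral_measure_of_kernel:
      "f \<in> borel_measurable R \<Longrightarrow> (\<integral>\<^sup>+x. f x \<partial>N) = (\<integral>\<^sup>+y. \<integral>\<^sup>+x. f x \<partial>K y \<partial>M)"
proof -
  have sets_N: "sets N = sets R"
    unfolding N_def by simp
  have measurable_emeasure: "(\<lambda>y. emeasure (K y) A) \<in> borel_measurable M" if "A \<in> sets R" for A
    using measurable_K[of "indicator A"] that by (simp add: sets_K)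
  have emeasure_N: "emeasure N A = (\<integral>\<^sup>+y. emeasure (K y) A \<partial>M)" if "A \<in> sets R" for A
    unfolding N_def
  proof (rule emeasure_measure_of_sigma[OF sets.sigma_algebra_axioms _ _ that])
    show "positive (sets R) (\<lambda>A. \<integral>\<^sup>+y. emeasure (K y) A \<partial>M)"
      by (simp add: positive_def)
    show "countably_additive (sets R) (\<lambda>A. \<integral>\<^sup>+y. emeasure (K y) A \<partial>M)"
    proof (rule countably_additiveI)
      fix F :: "nat \<Rightarrow> 'a set"
      assume F: "range F \<subseteq> sets R" "disjoint_family F"
      then have "(\<Sum>i. \<integral>\<^sup>+y. emeasure (K y) (F i) \<partial>M) = (\<integral>\<^sup>+y. (\<Sum>i. emeasure (K y) (F i)) \<partial>M)"
        by (intro nn_integral_suminf[symmetric] measurable_emeasure) auto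
      also have "\<dots> = (\<integral>\<^sup>+y. emeasure (K y) (\<Union>i. F i) \<partial>M)"
        using F by (intro nn_integral_cong suminf_emeasure) (auto simp: sets_K)
      finally show "(\<Sum>i. \<integral>\<^sup>+y. emeasure (K y) (F i) \<partial>M) = (\<integral>\<^sup>+y. emeasure (K y) (\<Union>i. F i) \<partial>M)" .
    qed
  qed
  then show "A \<in> sets R \<Longrightarrow> emeasure N A = (\<integral>\<^sup>+y. emeasure (K y) A \<partial>M)" .
  show "f \<in> borel_measurable R \<Longrightarrow> (\<integral>\<^sup>+x. f x \<partial>N) = (\<integral>\<^sup>+y. \<integral>\<^sup>+x. f x \<partial>K y \<partial>M)"
  proof (induction rule: borel_measurable_induct)
    case (cong f g)
    have "(\<integral>\<^sup>+x. f x \<partial>N) = (\<integral>\<^sup>+x. g x \<partial>N)"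
      using cong(3) by (intro nn_integral_cong) (simp add: sets_eq_imp_space_eq[OF sets_N])
    moreover have "(\<integral>\<^sup>+x. f x \<partial>K y) = (\<integral>\<^sup>+x. g x \<partial>K y)" for y
      using cong(3) by (intro nn_integral_cong) (simp add: sets_eq_imp_space_eq[OF sets_K])
    ultimately show ?case
      using cong(4) by simp
  next
    case (set A)
    then show ?case
      by (simp add: emeasure_N sets_N sets_K cong: nn_integral_cong)
  next
    case (mult u c)
    then show ?case
      by (simp add: nn_integral_cmult measurable_K measurable_cong_sets[OF sets_N]
          measurable_cong_sets[OF sets_K])
  next
    case (add u v)
    then show ?case
      by (simp add: nn_integral_add measurable_K measurable_cong_sets[OF sets_N]
          measurable_cong_sets[OF sets_K])
  next
    case (seq U)
    have "incseq (\<lambda>i y. \<integral>\<^sup>+x. U i x \<partial>K y)"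
      using \<open>incseq U\<close> by (auto simp: incseq_def le_fun_def intro!: nn_integral_mono)
    with seq show ?case
      by (simp add: nn_integral_monotone_convergence_SUP measurable_K image_comp
          measurable_cong_sets[OF sets_N] measurable_cong_sets[OF sets_K])
  qed
qed

lemma
  fixes M1 M2 R :: "'a measure" and c d :: ennreal
  defines "N \<equiv> measure_of (space R) (sets R) (\<lambda>A. c * emeasure M1 A + d * emeasure M2 A)"
  assumes sets_M1: "sets M1 = sets R" and sets_M2: "sets M2 = sets R"
  shows emeasure_measure_of_sum: "A \<in> sets R \<Longrightarrow> emeasure N A = c * emeasure M1 A + d * emeasure M2 A"
    and nn_integral_measure_of_sum:
      "f \<in> borel_measurable R \<Longrightarrow> (\<integral>\<^sup>+x. f x \<partial>N) = c * (\<integral>\<^sup>+x. f x \<partial>M1) + d * (\<integral>\<^sup>+x. f x \<partial>M2)"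
proof -
  \<comment> \<open>mix the rescaled measures over the two-point space\<close>
  define K where "K b = (if b then scale_measure c M1 else scale_measure d M2)" for b
  have sets_K: "sets (K b) = sets R" for b
    by (simp add: K_def sets_M1 sets_M2)
  have measurable_K: "(\<lambda>b. \<integral>\<^sup>+x. f x \<partial>K b) \<in> borel_measurable (count_space UNIV)" for f
    by simp
  have N_kernel: "N = measure_of (space R) (sets R) (\<lambda>A. \<integral>\<^sup>+b. emeasure (K b) A \<partial>count_space UNIV)"
    by (simp add: N_def K_def nn_integral_count_space_finite UNIV_bool add.commute)
  show "emeasure N A = c * emeasure M1 A + d * emeasure M2 A" if "A \<in> sets R" for A
  proof -
    have "emeasure N A = (\<integral>\<^sup>+b. emeasure (K b) A \<partial>count_space UNIV)"
      unfolding N_kernel using that by (rule emeasure_measure_of_kernel[OF sets_K measurable_K])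
    then show ?thesis
      by (simp add: K_def nn_integral_count_space_finite UNIV_bool add.commute)
  qed
  show "(\<integral>\<^sup>+x. f x \<partial>N) = c * (\<integral>\<^sup>+x. f x \<partial>M1) + d * (\<integral>\<^sup>+x. f x \<partial>M2)"
    if "f \<in> borel_measurable R" for f
  proof -
    have "(\<integral>\<^sup>+x. f x \<partial>N) = (\<integral>\<^sup>+b. \<integral>\<^sup>+x. f x \<partial>K b \<partial>count_space UNIV)"
      unfolding N_kernel using that by (rule nn_integral_measure_of_kernel[OF sets_K measurable_K])
    then show ?thesis
      using that by (simp add: K_def nn_integral_count_space_finite UNIV_bool add.commute
          nn_integral_scale_measure measurable_cong_sets[OF sets_M1] measurable_cong_sets[OF sets_M2])
  qed
qed

section \<open>The Kendall convolution of point masses\<close>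

lemma sym_delta_eq_sum:
  "sym_delta x = measure_of UNIV (sets borel)
     (\<lambda>A. 1/2 * emeasure (return borel x) A + 1/2 * emeasure (return borel (-x)) A)"
  unfolding sym_delta_def
  by (rule measure_of_eq)
    (auto simp: sets.sigma_sets_eq[of borel, simplified] ennreal_divide_times add_divide_distrib_ennreal)

lemma sets_sym_delta [simp, measurable_cong]: "sets (sym_delta x) = sets borel"
  unfolding sym_delta_eq_sum by (simp add: sets.sigma_sets_eq[of borel, unfolded space_borel])

lemma space_sym_delta [simp]: "space (sym_delta x) = UNIV"
  using sets_eq_imp_space_eq[OF sets_sym_delta] by simp

lemma emeasure_sym_delta:
  "A \<in> sets borel \<Longrightarrow> emeasure (sym_delta x) A = 1/2 * indicator A x + 1/2 * indicator A (-x)"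
  unfolding sym_delta_eq_sum by (subst emeasure_measure_of_sum[where R=borel, unfolded space_borel]) simp_all

lemma nn_integral_sym_delta:
  "f \<in> borel_measurable borel \<Longrightarrow> (\<integral>\<^sup>+z. f z \<partial>sym_delta x) = 1/2 * f x + 1/2 * f (-x)"
  unfolding sym_delta_eq_sum
  by (subst nn_integral_measure_of_sum[where R=borel, unfolded space_borel]) (simp_all add: nn_integral_return)

lemma AE_sym_delta: "AE z in sym_delta x. z = x \<or> z = -x"
  by (rule AE_I[where N="UNIV - {x, -x}"]) (auto simp: emeasure_sym_delta)

lemma half_plus_half_ennreal: "1/2 * X + 1/2 * X = (X :: ennreal)"
proof -
  have "(1/2 :: ennreal) + 1/2 = 1"
    by (simp only: add_divide_distrib_ennreal[symmetric] one_add_one) simp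
  then show ?thesis
    by (metis distrib_right mult_1)
qed

lemma emeasure_sym_delta_UNIV: "emeasure (sym_delta x) UNIV = 1"
  using half_plus_half_ennreal[of 1] by (simp add: emeasure_sym_delta)

lemma sets_mixture [simp, measurable_cong]:
  "sets \<mu> = sets borel \<Longrightarrow> sets \<kappa> = sets borel \<Longrightarrow> sets (mixture p \<mu> \<kappa>) = sets borel"
  unfolding mixture_def by (simp add: sets.sigma_sets_eq[of borel, unfolded space_borel])

lemma nn_integral_mixture:
  "sets \<mu> = sets borel \<Longrightarrow> sets \<kappa> = sets borel \<Longrightarrow> f \<in> borel_measurable borel \<Longrightarrow>
   (\<integral>\<^sup>+z. f z \<partial>mixture p \<mu> \<kappa>) = ennreal p * (\<integral>\<^sup>+z. f z \<partial>\<mu>) + ennreal (1 - p) * (\<integral>\<^sup>+z. f z \<partial>\<kappa>)"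
  unfolding mixture_def by (rule nn_integral_measure_of_sum[where R=borel, unfolded space_borel])

definition sym_pareto_density :: "real \<Rightarrow> real \<Rightarrow> real" where
  "sym_pareto_density \<alpha> w = (if 1 \<le> \<bar>w\<bar> then \<alpha> * \<bar>w\<bar> powr (- 2 * \<alpha> - 1) else 0)"

lemma sym_pareto_density_nonneg: "0 \<le> \<alpha> \<Longrightarrow> 0 \<le> sym_pareto_density \<alpha> w"
  by (simp add: sym_pareto_density_def)

lemma sets_sym_pareto [simp, measurable_cong]: "sets (sym_pareto \<alpha>) = sets borel"
  by (simp add: sym_pareto_def)

lemma nn_integral_sym_pareto:
  "f \<in> borel_measurable borel \<Longrightarrow>
   (\<integral>\<^sup>+z. f z \<partial>sym_pareto \<alpha>) = (\<integral>\<^sup>+w. ennreal (sym_pareto_density \<alpha> w) * f w \<partial>lborel)"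
  unfolding sym_pareto_def sym_pareto_density_def[symmetric]
  by (subst nn_integral_density) (auto simp: sym_pareto_density_def)

lemma sets_kendall_pt [simp, measurable_cong]: "sets (kendall_pt \<alpha> x y) = sets borel"
  by (simp add: kendall_pt_def Let_def dil_def)

lemma kendall_pt_uminus: "kendall_pt \<alpha> (-x) y = kendall_pt \<alpha> x y"
  by (simp add: kendall_pt_def)

lemma nn_integral_kendall_pt:
  fixes \<alpha> x y :: real
  defines "M \<equiv> max \<bar>x\<bar> \<bar>y\<bar>" and "p \<equiv> (min \<bar>x\<bar> \<bar>y\<bar> / max \<bar>x\<bar> \<bar>y\<bar>) powr \<alpha>"
  assumes f: "f \<in> borel_measurable borel"
  shows "(\<integral>\<^sup>+z. f z \<partial>kendall_pt \<alpha> x y) =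
    (if M = 0 then f 0 else
     ennreal p * (\<integral>\<^sup>+w. ennreal (sym_pareto_density \<alpha> w) * f (M * w) \<partial>lborel)
     + ennreal (1 - p) * (1/2 * f M + 1/2 * f (- M)))"
proof (cases "M = 0")
  case True
  then have "x = 0" "y = 0"
    by (auto simp: M_def max_def split: if_splits)
  then show ?thesis
    by (simp add: kendall_pt_def M_def dil_def nn_integral_return f)
next
  case False
  have kendall_pt_eq: "kendall_pt \<alpha> x y = distr (mixture p (sym_pareto \<alpha>) (sym_delta 1)) borel ((*) M)"
    using False by (simp add: kendall_pt_def Let_def dil_def M_def p_def)
  have "(\<integral>\<^sup>+z. f z \<partial>kendall_pt \<alpha> x y) = (\<integral>\<^sup>+z. f (M * z) \<partial>mixture p (sym_pareto \<alpha>) (sym_delta 1))"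
    unfolding kendall_pt_eq using f by (simp add: nn_integral_distr)
  also have "\<dots> = ennreal p * (\<integral>\<^sup>+z. f (M * z) \<partial>sym_pareto \<alpha>) + ennreal (1 - p) * (\<integral>\<^sup>+z. f (M * z) \<partial>sym_delta 1)"
    using f by (simp add: nn_integral_mixture)
  finally show ?thesis
    using False f by (simp add: nn_integral_sym_pareto nn_integral_sym_delta)
qed

lemma borel_measurable_nn_integral_kendall_pt:
  assumes f: "f \<in> borel_measurable borel"
  shows "(\<lambda>y. \<integral>\<^sup>+z. f z \<partial>kendall_pt \<alpha> x y) \<in> borel_measurable borel"
proof -
  have "(\<lambda>s. \<integral>\<^sup>+w. ennreal (sym_pareto_density \<alpha> w) * f (s * w) \<partial>lborel) \<in> borel_measurable borel"
    using f unfolding sym_pareto_density_def by measurable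
  then show ?thesis
    unfolding nn_integral_kendall_pt[OF f] using f by measurable
qed

lemma nn_integral_kstep:
  assumes sets_\<nu>: "sets \<nu> = sets borel" and f: "f \<in> borel_measurable borel"
  shows "(\<integral>\<^sup>+z. f z \<partial>kstep \<alpha> \<nu> x) = (\<integral>\<^sup>+y. \<integral>\<^sup>+z. f z \<partial>kendall_pt \<alpha> x y \<partial>\<nu>)"
proof -
  have kstep_eq: "kstep \<alpha> \<nu> x = measure_of UNIV (sets borel) (\<lambda>A. \<integral>\<^sup>+y. emeasure (kendall_pt \<alpha> x y) A \<partial>\<nu>)"
    unfolding kstep_def kendall_conv_def
  proof (rule measure_of_eq)
    fix A :: "real set"
    have "(\<integral>\<^sup>+x'. \<integral>\<^sup>+y. emeasure (kendall_pt \<alpha> x' y) A \<partial>\<nu> \<partial>sym_delta x)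
        = (\<integral>\<^sup>+x'. (\<integral>\<^sup>+y. emeasure (kendall_pt \<alpha> x y) A \<partial>\<nu>) \<partial>sym_delta x)"
      by (rule nn_integral_cong_AE) (use AE_sym_delta[of x] in \<open>auto simp: kendall_pt_uminus\<close>)
    then show "(\<integral>\<^sup>+x'. \<integral>\<^sup>+y. emeasure (kendall_pt \<alpha> x' y) A \<partial>\<nu> \<partial>sym_delta x)
        = (\<integral>\<^sup>+y. emeasure (kendall_pt \<alpha> x y) A \<partial>\<nu>)"
      by (simp add: emeasure_sym_delta_UNIV)
  qed simp
  have measurable_kernel: "(\<lambda>y. \<integral>\<^sup>+z. g z \<partial>kendall_pt \<alpha> x y) \<in> borel_measurable \<nu>"
    if "g \<in> borel_measurable borel" for g
    using borel_measurable_nn_integral_kendall_pt[OF that] by (simp add: measurable_cong_sets[OF sets_\<nu>])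
  show ?thesis
    unfolding kstep_eq
    by (rule nn_integral_measure_of_kernel[where R=borel and M=\<nu> and K="kendall_pt \<alpha> x",
          unfolded space_borel, OF sets_kendall_pt measurable_kernel f])
qed

section \<open>Integrals against the symmetric Pareto law\<close>

lemma has_integral_pareto_tail:
  fixes \<beta> c :: real
  assumes "0 < \<beta>" "1 \<le> c"
  shows "((\<lambda>w. \<beta> * w powr (- \<beta> - 1)) has_integral (1 - c powr (- \<beta>))) {1..c}"
proof -
  define F where "F w = - (w powr (- \<beta>))" for w :: real
  have "((\<lambda>w. \<beta> * w powr (- \<beta> - 1)) has_integral (F c - F 1)) {1..c}"
  proof (rule fundamental_theorem_of_calculus)
    fix w assume "w \<in> {1..c}"
    then have "0 < w" by simp
    then show "(F has_vector_derivative (\<beta> * w powr (- \<beta> - 1))) (at w within {1..c})"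
      unfolding F_def has_real_derivative_iff_has_vector_derivative[symmetric]
      by (auto intro!: derivative_eq_intros simp: algebra_simps)
  qed (use assms in simp)
  then show ?thesis
    by (simp add: F_def)
qed

lemma nn_integral_lborel_even:
  fixes f :: "real \<Rightarrow> real"
  assumes "1 \<le> c" and f: "(f has_integral I) {1..c}" "f \<in> borel_measurable borel"
    and f_nonneg: "\<And>w. 1 \<le> w \<Longrightarrow> w \<le> c \<Longrightarrow> 0 \<le> f w"
  shows "(\<integral>\<^sup>+w. ennreal (if 1 \<le> \<bar>w\<bar> \<and> \<bar>w\<bar> \<le> c then f \<bar>w\<bar> else 0) \<partial>lborel) = ennreal (2 * I)"
proof -
  have pos: "((\<lambda>w. f \<bar>w\<bar>) has_integral I) {1..c}"
    by (rule has_integral_eq[OF _ f(1)]) auto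
  have "((\<lambda>w. f (- w)) has_integral I) {-c..-1}"
    using f(1) by simp
  then have neg: "((\<lambda>w. f \<bar>w\<bar>) has_integral I) {-c..-1}"
    by (rule has_integral_eq[rotated]) auto
  have "((\<lambda>w. f \<bar>w\<bar>) has_integral (I + I)) ({-c..-1} \<union> {1..c})"
    by (rule has_integral_Un[OF neg pos]) (use \<open>1 \<le> c\<close> in auto)
  then have "((\<lambda>w. if w \<in> {-c..-1} \<union> {1..c} then f \<bar>w\<bar> else 0) has_integral (2 * I)) UNIV"
    unfolding has_integral_restrict_UNIV mult_2 .
  moreover have "(\<lambda>w. if w \<in> {-c..-1} \<union> {1..c} then f \<bar>w\<bar> else 0)
      = (\<lambda>w. if 1 \<le> \<bar>w\<bar> \<and> \<bar>w\<bar> \<le> c then f \<bar>w\<bar> else 0)"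
    by (rule ext) auto
  ultimately show ?thesis
    by (intro nn_integral_has_integral_lborel) (use f f_nonneg in auto)
qed

text \<open>\<open>psi_cut \<alpha> a\<close> and \<open>phi_cut \<alpha> a\<close> are the functions \<open>\<psi>\<close> and \<open>\<phi>\<close> of the proof idea above.\<close>

definition psi_cut :: "real \<Rightarrow> real \<Rightarrow> real \<Rightarrow> real" where
  "psi_cut \<alpha> a z = (if \<bar>z\<bar> < a then 1 - (\<bar>z\<bar> / a) powr \<alpha> else 0)"

definition phi_cut :: "real \<Rightarrow> real \<Rightarrow> real \<Rightarrow> real" where
  "phi_cut \<alpha> a z = (if \<bar>z\<bar> < a then (\<bar>z\<bar> / a) powr \<alpha> else 0)"

lemma psi_cut_measurable [measurable]: "psi_cut \<alpha> a \<in> borel_measurable borel"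
  unfolding psi_cut_def by measurable

lemma phi_cut_measurable [measurable]: "phi_cut \<alpha> a \<in> borel_measurable borel"
  unfolding phi_cut_def by measurable

lemma psi_cut_nonneg: "0 < a \<Longrightarrow> 0 \<le> \<alpha> \<Longrightarrow> 0 \<le> psi_cut \<alpha> a z"
  by (simp add: psi_cut_def powr_le1)

lemma phi_cut_nonneg: "0 \<le> phi_cut \<alpha> a z"
  by (simp add: phi_cut_def)

lemma psi_cut_abs [simp]: "psi_cut \<alpha> a \<bar>z\<bar> = psi_cut \<alpha> a z"
  and psi_cut_uminus [simp]: "psi_cut \<alpha> a (- z) = psi_cut \<alpha> a z"
  and phi_cut_abs [simp]: "phi_cut \<alpha> a \<bar>z\<bar> = phi_cut \<alpha> a z"
  and phi_cut_uminus [simp]: "phi_cut \<alpha> a (- z) = phi_cut \<alpha> a z"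
  by (simp_all add: psi_cut_def phi_cut_def)

lemma
  fixes M :: real
  assumes "0 < M"
  shows psi_cut_scale: "psi_cut \<alpha> a (M * w) = psi_cut \<alpha> (a / M) w"
    and phi_cut_scale: "phi_cut \<alpha> a (M * w) = phi_cut \<alpha> (a / M) w"
  using assms by (simp_all add: psi_cut_def phi_cut_def abs_mult pos_less_divide_eq mult.commute)

lemma Psi_divide_eq_psi_cut:
  assumes "0 < a" "0 < \<alpha>"
  shows "Psi \<alpha> (x / a) = psi_cut \<alpha> a x"
proof (cases "\<bar>x\<bar> < a")
  case True
  then have "(\<bar>x\<bar> / a) powr \<alpha> \<le> 1"
    using assms by (simp add: powr_le1)
  then show ?thesis
    using True assms by (simp add: Psi_def psi_cut_def)
next
  case False
  then have "1 \<le> (\<bar>x\<bar> / a) powr \<alpha>"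
    using assms by (simp add: ge_one_powr_ge_zero)
  then show ?thesis
    using False assms by (simp add: Psi_def psi_cut_def)
qed

lemma sym_pareto_density_mult_powr:
  fixes w c \<alpha> :: real
  assumes "1 \<le> \<bar>w\<bar>" "0 < c"
  shows "sym_pareto_density \<alpha> w * (\<bar>w\<bar> / c) powr \<alpha> = c powr (- \<alpha>) * (\<alpha> * \<bar>w\<bar> powr (- \<alpha> - 1))"
proof -
  have "(\<bar>w\<bar> / c) powr \<alpha> = \<bar>w\<bar> powr \<alpha> / c powr \<alpha>"
    using assms by (simp add: powr_divide)
  moreover have "\<bar>w\<bar> powr (- 2 * \<alpha> - 1) * \<bar>w\<bar> powr \<alpha> = \<bar>w\<bar> powr (- \<alpha> - 1)"
    by (simp add: powr_add[symmetric])
  ultimately show ?thesis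
    using assms by (simp add: sym_pareto_density_def powr_minus divide_inverse algebra_simps)
qed

lemma AE_lborel_abs_neq: "AE w in lborel. \<bar>w :: real\<bar> \<noteq> c"
  using AE_lborel_singleton[of c] AE_lborel_singleton[of "- c"] by eventually_elim auto

lemma nn_integral_pareto_psi_cut:
  assumes "0 < \<alpha>" "0 < M" "M < a"
  shows "(\<integral>\<^sup>+w. ennreal (sym_pareto_density \<alpha> w) * ennreal (psi_cut \<alpha> a (M * w)) \<partial>lborel)
    = ennreal ((1 - (M / a) powr \<alpha>)\<^sup>2)"
proof -
  define c where "c = a / M"
  define t where "t = c powr (- \<alpha>)"
  have c: "1 < c" and t: "t = (M / a) powr \<alpha>"
    using assms by (simp_all add: c_def t_def powr_minus_divide powr_divide)
  define f where "f w = 1/2 * ((2 * \<alpha>) * w powr (- (2 * \<alpha>) - 1)) - t * (\<alpha> * w powr (- \<alpha> - 1))" for w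
  have f_integral: "(f has_integral (1/2 * (1 - c powr (- (2 * \<alpha>))) - t * (1 - t))) {1..c}"
    unfolding f_def t_def using assms c
    by (intro has_integral_diff has_integral_mult_right has_integral_pareto_tail) simp_all
  have f_eq: "f w = sym_pareto_density \<alpha> w * (1 - (\<bar>w\<bar> / c) powr \<alpha>)" if "1 \<le> w" for w
    using that c sym_pareto_density_mult_powr[of w c \<alpha>]
    by (simp add: f_def t_def sym_pareto_density_def algebra_simps)
  have f_nonneg: "0 \<le> f w" if "1 \<le> w" "w \<le> c" for w
    using that c assms by (simp add: f_eq sym_pareto_density_nonneg powr_le1)
  have "(\<integral>\<^sup>+w. ennreal (if 1 \<le> \<bar>w\<bar> \<and> \<bar>w\<bar> \<le> c then f \<bar>w\<bar> else 0) \<partial>lborel)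
      = ennreal (2 * (1/2 * (1 - c powr (- (2 * \<alpha>))) - t * (1 - t)))"
    by (rule nn_integral_lborel_even[OF _ f_integral _ f_nonneg]) (use c in \<open>simp_all add: f_def\<close>)
  also have "2 * (1/2 * (1 - c powr (- (2 * \<alpha>))) - t * (1 - t)) = (1 - (M / a) powr \<alpha>)\<^sup>2"
    unfolding t[symmetric] t_def by (simp add: power2_eq_square powr_add[symmetric] algebra_simps)
  finally have integral: "(\<integral>\<^sup>+w. ennreal (if 1 \<le> \<bar>w\<bar> \<and> \<bar>w\<bar> \<le> c then f \<bar>w\<bar> else 0) \<partial>lborel)
      = ennreal ((1 - (M / a) powr \<alpha>)\<^sup>2)" .
  have pointwise: "ennreal (sym_pareto_density \<alpha> w) * ennreal (psi_cut \<alpha> a (M * w))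
      = ennreal (if 1 \<le> \<bar>w\<bar> \<and> \<bar>w\<bar> \<le> c then f \<bar>w\<bar> else 0)" if "\<bar>w\<bar> \<noteq> c" for w
  proof -
    have "psi_cut \<alpha> a (M * w) = psi_cut \<alpha> c w"
      using assms by (simp add: psi_cut_scale c_def)
    then show ?thesis
      using that assms c f_eq[of "\<bar>w\<bar>"]
      by (auto simp: psi_cut_def sym_pareto_density_def ennreal_mult'[symmetric])
  qed
  show ?thesis
    unfolding integral[symmetric]
    by (rule nn_integral_cong_AE, use AE_lborel_abs_neq[of c] in eventually_elim) (rule pointwise)
qed

lemma nn_integral_pareto_phi_cut:
  assumes "0 < \<alpha>" "0 < M" "M < a"
  shows "(\<integral>\<^sup>+w. ennreal (sym_pareto_density \<alpha> w) * ennreal (phi_cut \<alpha> a (M * w)) \<partial>lborel)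
    = ennreal (2 * (M / a) powr \<alpha> * (1 - (M / a) powr \<alpha>))"
proof -
  define c where "c = a / M"
  define t where "t = c powr (- \<alpha>)"
  have c: "1 < c" and t: "t = (M / a) powr \<alpha>"
    using assms by (simp_all add: c_def t_def powr_minus_divide powr_divide)
  define f where "f w = t * (\<alpha> * w powr (- \<alpha> - 1))" for w
  have f_integral: "(f has_integral (t * (1 - t))) {1..c}"
    unfolding f_def t_def using assms c
    by (intro has_integral_mult_right has_integral_pareto_tail) simp_all
  have f_eq: "f w = sym_pareto_density \<alpha> w * (\<bar>w\<bar> / c) powr \<alpha>" if "1 \<le> w" for w
    using that c sym_pareto_density_mult_powr[of w c \<alpha>] by (simp add: f_def t_def)
  have f_nonneg: "0 \<le> f w" for w
    using assms by (simp add: f_def t_def)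
  have "(\<integral>\<^sup>+w. ennreal (if 1 \<le> \<bar>w\<bar> \<and> \<bar>w\<bar> \<le> c then f \<bar>w\<bar> else 0) \<partial>lborel)
      = ennreal (2 * (t * (1 - t)))"
    by (rule nn_integral_lborel_even[OF _ f_integral _ f_nonneg]) (use c in \<open>simp_all add: f_def\<close>)
  also have "2 * (t * (1 - t)) = 2 * (M / a) powr \<alpha> * (1 - (M / a) powr \<alpha>)"
    by (simp add: t)
  finally have integral: "(\<integral>\<^sup>+w. ennreal (if 1 \<le> \<bar>w\<bar> \<and> \<bar>w\<bar> \<le> c then f \<bar>w\<bar> else 0) \<partial>lborel)
      = ennreal (2 * (M / a) powr \<alpha> * (1 - (M / a) powr \<alpha>))" .
  have pointwise: "ennreal (sym_pareto_density \<alpha> w) * ennreal (phi_cut \<alpha> a (M * w))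
      = ennreal (if 1 \<le> \<bar>w\<bar> \<and> \<bar>w\<bar> \<le> c then f \<bar>w\<bar> else 0)" if "\<bar>w\<bar> \<noteq> c" for w
  proof -
    have "phi_cut \<alpha> a (M * w) = phi_cut \<alpha> c w"
      using assms by (simp add: phi_cut_scale c_def)
    then show ?thesis
      using that assms c f_eq[of "\<bar>w\<bar>"]
      by (auto simp: phi_cut_def sym_pareto_density_def ennreal_mult'[symmetric])
  qed
  show ?thesis
    unfolding integral[symmetric]
    by (rule nn_integral_cong_AE, use AE_lborel_abs_neq[of c] in eventually_elim) (rule pointwise)
qed

section \<open>The Kendall convolution of \<open>psi_cut\<close> and \<open>phi_cut\<close>\<close>

lemma ennreal_mult_plus_mult:
  fixes u v G H :: real
  assumes "0 \<le> u" "0 \<le> v" "0 \<le> G" "0 \<le> H"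
  shows "ennreal u * ennreal G + ennreal v * ennreal H = ennreal (u * G + v * H)"
  using assms by (simp add: ennreal_mult ennreal_plus)

lemma nn_integral_kendall_pt_even:
  fixes \<alpha> x y :: real and g :: "real \<Rightarrow> real"
  defines "M \<equiv> max \<bar>x\<bar> \<bar>y\<bar>" and "p \<equiv> (min \<bar>x\<bar> \<bar>y\<bar> / max \<bar>x\<bar> \<bar>y\<bar>) powr \<alpha>"
  assumes "g \<in> borel_measurable borel" "\<And>z. g (- z) = g z" "0 < M"
  shows "(\<integral>\<^sup>+z. ennreal (g z) \<partial>kendall_pt \<alpha> x y) =
    ennreal p * (\<integral>\<^sup>+w. ennreal (sym_pareto_density \<alpha> w) * ennreal (g (M * w)) \<partial>lborel)
    + ennreal (1 - p) * ennreal (g M)"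
  using assms nn_integral_kendall_pt[of "\<lambda>z. ennreal (g z)" \<alpha> x y]
  by (simp add: half_plus_half_ennreal)

lemma nn_integral_kendall_pt_outside:
  fixes g :: "real \<Rightarrow> real"
  assumes "g \<in> borel_measurable borel" and g_outside: "\<And>z. a \<le> \<bar>z\<bar> \<Longrightarrow> g z = 0"
    and "0 < a" "a \<le> max \<bar>x\<bar> \<bar>y\<bar>"
  shows "(\<integral>\<^sup>+z. ennreal (g z) \<partial>kendall_pt \<alpha> x y) = 0"
proof -
  define M where "M = max \<bar>x\<bar> \<bar>y\<bar>"
  have "a \<le> \<bar>M * w\<bar>" if "1 \<le> \<bar>w\<bar>" for w
    using that assms mult_mono[of a M 1 "\<bar>w\<bar>"] by (simp add: M_def abs_mult)
  then have "ennreal (sym_pareto_density \<alpha> w) * ennreal (g (M * w)) = 0" for w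
    by (cases "1 \<le> \<bar>w\<bar>") (simp_all add: g_outside sym_pareto_density_def)
  then have "(\<integral>\<^sup>+w. ennreal (sym_pareto_density \<alpha> w) * ennreal (g (M * w)) \<partial>lborel) = 0"
    by (simp del: mult_eq_0_iff)
  then show ?thesis
    using assms nn_integral_kendall_pt[of "\<lambda>z. ennreal (g z)" \<alpha> x y]
    by (simp add: M_def[symmetric] g_outside)
qed

lemma
  fixes x y :: real
  defines "M \<equiv> max \<bar>x\<bar> \<bar>y\<bar>" and "m \<equiv> min \<bar>x\<bar> \<bar>y\<bar>"
  assumes bounds: "0 < \<alpha>" "0 < M" "M < a"
  shows nn_integral_kendall_pt_psi_cut_inside:
      "(\<integral>\<^sup>+z. ennreal (psi_cut \<alpha> a z) \<partial>kendall_pt \<alpha> x y) = ennreal (psi_cut \<alpha> a M * psi_cut \<alpha> a m)"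
    and nn_integral_kendall_pt_phi_cut_inside:
      "(\<integral>\<^sup>+z. ennreal (phi_cut \<alpha> a z) \<partial>kendall_pt \<alpha> x y)
        = ennreal (phi_cut \<alpha> a M * psi_cut \<alpha> a m + psi_cut \<alpha> a M * phi_cut \<alpha> a m)"
proof -
  let ?\<psi> = "psi_cut \<alpha> a" and ?\<phi> = "phi_cut \<alpha> a"
  define p where "p = (m / M) powr \<alpha>"
  define t where "t = (M / a) powr \<alpha>"
  have m: "0 \<le> m" "m \<le> M"
    by (simp_all add: M_def m_def)
  have p: "0 \<le> p" "p \<le> 1" and t: "0 \<le> t" "t \<le> 1"
    using bounds m by (simp_all add: p_def t_def powr_le1)
  have "(m / a) powr \<alpha> = p * t"
    using bounds m by (simp add: p_def t_def powr_mult[symmetric])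
  then have at_M_m: "?\<psi> M = 1 - t" "?\<phi> M = t" "?\<psi> m = 1 - p * t" "?\<phi> m = p * t"
    using bounds m by (simp_all add: psi_cut_def phi_cut_def t_def)
  have "(\<integral>\<^sup>+z. ennreal (?\<psi> z) \<partial>kendall_pt \<alpha> x y) = ennreal (p * (1 - t)\<^sup>2 + (1 - p) * (1 - t))"
    using bounds p t at_M_m
    by (simp add: nn_integral_kendall_pt_even M_def[symmetric] m_def[symmetric] p_def[symmetric]
        nn_integral_pareto_psi_cut t_def[symmetric] ennreal_mult_plus_mult)
  then show "(\<integral>\<^sup>+z. ennreal (?\<psi> z) \<partial>kendall_pt \<alpha> x y) = ennreal (?\<psi> M * ?\<psi> m)"
    unfolding at_M_m by (simp add: power2_eq_square algebra_simps)
  have "(\<integral>\<^sup>+z. ennreal (?\<phi> z) \<partial>kendall_pt \<alpha> x y) = ennreal (p * (2 * t * (1 - t)) + (1 - p) * t)"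
    using bounds p t at_M_m
    by (simp add: nn_integral_kendall_pt_even M_def[symmetric] m_def[symmetric] p_def[symmetric]
        nn_integral_pareto_phi_cut t_def[symmetric] ennreal_mult_plus_mult)
  then show "(\<integral>\<^sup>+z. ennreal (?\<phi> z) \<partial>kendall_pt \<alpha> x y) = ennreal (?\<phi> M * ?\<psi> m + ?\<psi> M * ?\<phi> m)"
    unfolding at_M_m by (simp add: algebra_simps)
qed

lemma
  assumes "0 < a" "0 < \<alpha>"
  shows nn_integral_kendall_pt_psi_cut:
      "(\<integral>\<^sup>+z. ennreal (psi_cut \<alpha> a z) \<partial>kendall_pt \<alpha> x y) = ennreal (psi_cut \<alpha> a x * psi_cut \<alpha> a y)"
    and nn_integral_kendall_pt_phi_cut:
      "(\<integral>\<^sup>+z. ennreal (phi_cut \<alpha> a z) \<partial>kendall_pt \<alpha> x y)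
        = ennreal (phi_cut \<alpha> a x * psi_cut \<alpha> a y + psi_cut \<alpha> a x * phi_cut \<alpha> a y)"
proof -
  define M where "M = max \<bar>x\<bar> \<bar>y\<bar>"
  define m where "m = min \<bar>x\<bar> \<bar>y\<bar>"
  let ?\<psi> = "psi_cut \<alpha> a" and ?\<phi> = "phi_cut \<alpha> a"
  have max_min: "?\<psi> x * ?\<psi> y = ?\<psi> M * ?\<psi> m"
    "?\<phi> x * ?\<psi> y + ?\<psi> x * ?\<phi> y = ?\<phi> M * ?\<psi> m + ?\<psi> M * ?\<phi> m"
    by (cases "\<bar>x\<bar> \<le> \<bar>y\<bar>"; simp add: M_def m_def max_def min_def algebra_simps)+
  consider (zero) "M = 0" | (outside) "a \<le> M" | (inside) "0 < M" "M < a"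
    by (fastforce simp: M_def)
  then have "(\<integral>\<^sup>+z. ennreal (?\<psi> z) \<partial>kendall_pt \<alpha> x y) = ennreal (?\<psi> M * ?\<psi> m) \<and>
    (\<integral>\<^sup>+z. ennreal (?\<phi> z) \<partial>kendall_pt \<alpha> x y) = ennreal (?\<phi> M * ?\<psi> m + ?\<psi> M * ?\<phi> m)"
  proof cases
    case zero
    then have "x = 0" "y = 0"
      by (auto simp: M_def max_def split: if_splits)
    with assms show ?thesis
      using nn_integral_kendall_pt[of "\<lambda>z. ennreal (?\<psi> z)" \<alpha> x y]
        nn_integral_kendall_pt[of "\<lambda>z. ennreal (?\<phi> z)" \<alpha> x y]
      by (simp add: M_def m_def psi_cut_def phi_cut_def)
  next
    case outside
    then have "?\<psi> M = 0" "?\<phi> M = 0"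
      by (simp_all add: psi_cut_def phi_cut_def)
    moreover have "(\<integral>\<^sup>+z. ennreal (?\<psi> z) \<partial>kendall_pt \<alpha> x y) = 0"
      "(\<integral>\<^sup>+z. ennreal (?\<phi> z) \<partial>kendall_pt \<alpha> x y) = 0"
      by (rule nn_integral_kendall_pt_outside;
          use outside assms in \<open>simp add: M_def psi_cut_def phi_cut_def\<close>)+
    ultimately show ?thesis
      by simp
  next
    case inside
    with assms show ?thesis
      unfolding M_def m_def
      by (simp add: nn_integral_kendall_pt_psi_cut_inside nn_integral_kendall_pt_phi_cut_inside)
  qed
  then show "(\<integral>\<^sup>+z. ennreal (?\<psi> z) \<partial>kendall_pt \<alpha> x y) = ennreal (?\<psi> x * ?\<psi> y)"
    and "(\<integral>\<^sup>+z. ennreal (?\<phi> z) \<partial>kendall_pt \<alpha> x y) = ennreal (?\<phi> x * ?\<psi> y + ?\<psi> x * ?\<phi> y)"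
    unfolding max_min by simp_all
qed

lemma nn_integral_psi_phi_comb:
  assumes "sets N = sets borel" "0 \<le> A" "0 \<le> B" "0 < a" "0 \<le> \<alpha>"
  shows "(\<integral>\<^sup>+z. ennreal (A * psi_cut \<alpha> a z + B * phi_cut \<alpha> a z) \<partial>N)
    = ennreal A * (\<integral>\<^sup>+z. ennreal (psi_cut \<alpha> a z) \<partial>N) + ennreal B * (\<integral>\<^sup>+z. ennreal (phi_cut \<alpha> a z) \<partial>N)"
proof -
  have "ennreal (A * psi_cut \<alpha> a z + B * phi_cut \<alpha> a z)
      = ennreal A * ennreal (psi_cut \<alpha> a z) + ennreal B * ennreal (phi_cut \<alpha> a z)" for z
    using assms psi_cut_nonneg[of a \<alpha> z] phi_cut_nonneg[of \<alpha> a z]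
    by (simp add: ennreal_mult ennreal_plus)
  then show ?thesis
    using assms(1) by (simp add: nn_integral_add nn_integral_cmult measurable_cong_sets[OF assms(1)])
qed

lemma nn_integral_kendall_pt_psi_phi_comb:
  assumes "0 < a" "0 < \<alpha>" "0 \<le> A" "0 \<le> B"
  shows "(\<integral>\<^sup>+z. ennreal (A * psi_cut \<alpha> a z + B * phi_cut \<alpha> a z) \<partial>kendall_pt \<alpha> x y)
    = ennreal ((A * psi_cut \<alpha> a x + B * phi_cut \<alpha> a x) * psi_cut \<alpha> a y
        + B * psi_cut \<alpha> a x * phi_cut \<alpha> a y)"
proof -
  let ?\<psi> = "psi_cut \<alpha> a" and ?\<phi> = "phi_cut \<alpha> a"
  have "(\<integral>\<^sup>+z. ennreal (A * ?\<psi> z + B * ?\<phi> z) \<partial>kendall_pt \<alpha> x y)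
      = ennreal A * ennreal (?\<psi> x * ?\<psi> y) + ennreal B * ennreal (?\<phi> x * ?\<psi> y + ?\<psi> x * ?\<phi> y)"
    using assms by (simp add: nn_integral_psi_phi_comb nn_integral_kendall_pt_psi_cut nn_integral_kendall_pt_phi_cut)
  also have "\<dots> = ennreal (A * (?\<psi> x * ?\<psi> y) + B * (?\<phi> x * ?\<psi> y + ?\<psi> x * ?\<phi> y))"
    using assms psi_cut_nonneg[of a \<alpha>] phi_cut_nonneg[of \<alpha> a] by (intro ennreal_mult_plus_mult) simp_all
  finally show ?thesis
    by (simp add: algebra_simps)
qed

lemma nn_integral_kstep_psi_phi_comb:
  assumes sets_\<nu>: "sets \<nu> = sets borel" and "0 < a" "0 < \<alpha>" "0 \<le> A" "0 \<le> B"
    and G: "(\<integral>\<^sup>+y. ennreal (psi_cut \<alpha> a y) \<partial>\<nu>) = ennreal G" "0 \<le> G"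
    and H: "(\<integral>\<^sup>+y. ennreal (phi_cut \<alpha> a y) \<partial>\<nu>) = ennreal H" "0 \<le> H"
  shows "(\<integral>\<^sup>+z. ennreal (A * psi_cut \<alpha> a z + B * phi_cut \<alpha> a z) \<partial>kstep \<alpha> \<nu> x)
    = ennreal ((A * G + B * H) * psi_cut \<alpha> a x + B * G * phi_cut \<alpha> a x)"
proof -
  let ?\<psi> = "psi_cut \<alpha> a" and ?\<phi> = "phi_cut \<alpha> a"
  have coeffs: "0 \<le> A * ?\<psi> x + B * ?\<phi> x" "0 \<le> B * ?\<psi> x"
    using assms psi_cut_nonneg[of a \<alpha> x] phi_cut_nonneg[of \<alpha> a x] by simp_all
  have "(\<integral>\<^sup>+z. ennreal (A * ?\<psi> z + B * ?\<phi> z) \<partial>kstep \<alpha> \<nu> x)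
      = (\<integral>\<^sup>+y. \<integral>\<^sup>+z. ennreal (A * ?\<psi> z + B * ?\<phi> z) \<partial>kendall_pt \<alpha> x y \<partial>\<nu>)"
    by (rule nn_integral_kstep[OF sets_\<nu>]) simp
  also have "\<dots> = (\<integral>\<^sup>+y. ennreal ((A * ?\<psi> x + B * ?\<phi> x) * ?\<psi> y + B * ?\<psi> x * ?\<phi> y) \<partial>\<nu>)"
    using assms by (simp only: nn_integral_kendall_pt_psi_phi_comb)
  also have "\<dots> = ennreal (A * ?\<psi> x + B * ?\<phi> x) * ennreal G + ennreal (B * ?\<psi> x) * ennreal H"
    using assms coeffs by (simp add: nn_integral_psi_phi_comb)
  also have "\<dots> = ennreal ((A * ?\<psi> x + B * ?\<phi> x) * G + (B * ?\<psi> x) * H)"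
    using coeffs G H by (intro ennreal_mult_plus_mult)
  finally show ?thesis
    by (simp add: algebra_simps)
qed

section \<open>The Kendall random walk\<close>

lemma
  assumes "finite_measure \<nu>" "sets \<nu> = sets borel" "0 < a" "0 < \<alpha>"
  shows nn_integral_psi_cut_eq_GG: "(\<integral>\<^sup>+y. ennreal (psi_cut \<alpha> a y) \<partial>\<nu>) = ennreal (GG \<alpha> \<nu> a)"
    and GG_nonneg: "0 \<le> GG \<alpha> \<nu> a"
proof -
  interpret finite_measure \<nu> by (rule assms(1))
  have psi_bounds: "0 \<le> psi_cut \<alpha> a y" "psi_cut \<alpha> a y \<le> 1" for y
    using assms by (simp_all add: psi_cut_nonneg) (simp add: psi_cut_def)
  have "integrable \<nu> (psi_cut \<alpha> a)"
    using psi_bounds by (intro integrable_const_bound[where B=1]) (simp_all add: measurable_cong_sets[OF assms(2)])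
  moreover have "GG \<alpha> \<nu> a = (\<integral>y. psi_cut \<alpha> a y \<partial>\<nu>)"
    using assms by (simp add: GG_def Psi_divide_eq_psi_cut)
  ultimately show "(\<integral>\<^sup>+y. ennreal (psi_cut \<alpha> a y) \<partial>\<nu>) = ennreal (GG \<alpha> \<nu> a)"
    and "0 \<le> GG \<alpha> \<nu> a"
    using psi_bounds by (simp_all add: nn_integral_eq_integral)
qed

lemma
  assumes "finite_measure \<nu>" "sets \<nu> = sets borel" "0 < a" "0 < \<alpha>"
    and "emeasure \<nu> {a} = 0" "emeasure \<nu> {-a} = 0"
  shows nn_integral_phi_cut_eq_HH: "(\<integral>\<^sup>+y. ennreal (phi_cut \<alpha> a y) \<partial>\<nu>) = ennreal (HH \<alpha> \<nu> a)"
    and HH_nonneg: "0 \<le> HH \<alpha> \<nu> a"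
proof -
  interpret finite_measure \<nu> by (rule assms(1))
  define h where "h y = a powr (- \<alpha>) * (indicator {-a..a} y * \<bar>y\<bar> powr \<alpha>)" for y :: real
  have h_nonneg: "0 \<le> h y" for y
    by (simp add: h_def)
  have "integrable \<nu> h"
    unfolding h_def using assms
    by (intro integrable_mult_right integrable_const_bound[where B="a powr \<alpha>"])
      (auto simp: measurable_cong_sets[OF assms(2)] indicator_def intro!: powr_mono2)
  moreover have "HH \<alpha> \<nu> a = (\<integral>y. h y \<partial>\<nu>)"
    by (simp add: HH_def h_def)
  moreover have "phi_cut \<alpha> a y = h y" if "y \<noteq> a" "y \<noteq> -a" for y
  proof (cases "\<bar>y\<bar> < a")
    case True
    have "(\<bar>y\<bar> / a) powr \<alpha> = \<bar>y\<bar> powr \<alpha> / a powr \<alpha>"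
      using assms by (simp add: powr_divide)
    moreover have "y \<in> {-a..a}"
      using True by auto
    ultimately show ?thesis
      using True by (simp add: phi_cut_def h_def powr_minus divide_inverse)
  next
    case False
    with that have "y \<notin> {-a..a}"
      by auto
    with False show ?thesis
      by (simp add: phi_cut_def h_def)
  qed
  moreover have "AE y in \<nu>. y \<noteq> a" "AE y in \<nu>. y \<noteq> -a"
    by (rule AE_I[where N="{a}"], use assms in auto) (rule AE_I[where N="{-a}"], use assms in auto)
  ultimately show "(\<integral>\<^sup>+y. ennreal (phi_cut \<alpha> a y) \<partial>\<nu>) = ennreal (HH \<alpha> \<nu> a)"
    and "0 \<le> HH \<alpha> \<nu> a"
    using h_nonneg
    by (auto simp: nn_integral_eq_integral[symmetric] intro!: nn_integral_cong_AE integral_nonneg_AE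
        elim!: AE_mp)
qed

lemma emeasure_uminus_singleton:
  assumes "distr \<nu> borel uminus = \<nu>" "sets \<nu> = sets borel"
  shows "emeasure \<nu> {- x} = emeasure \<nu> {x :: real}"
proof -
  have "emeasure \<nu> {- x} = emeasure (distr \<nu> borel uminus) {- x}"
    using assms(1) by simp
  also have "\<dots> = emeasure \<nu> (uminus -` {- x} \<inter> space \<nu>)"
    by (intro emeasure_distr) (simp_all add: measurable_cong_sets[OF assms(2) refl])
  also have "uminus -` {- x} \<inter> space \<nu> = {x}"
    using sets_eq_imp_space_eq[OF assms(2)] by auto
  finally show ?thesis .
qed

fun kendall_coeff :: "real \<Rightarrow> real \<Rightarrow> nat \<Rightarrow> real" where
  "kendall_coeff G H 0 = 1"
| "kendall_coeff G H (Suc k) = kendall_coeff G H k * G + G ^ k * H"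

lemma kendall_coeff_nonneg: "0 \<le> G \<Longrightarrow> 0 \<le> H \<Longrightarrow> 0 \<le> kendall_coeff G H k"
  by (induction k) simp_all

lemma kendall_coeff_Suc_eq: "kendall_coeff G H (Suc k) = G ^ k * (real (Suc k) * H + G)"
  by (induction k) (simp_all add: algebra_simps)

lemma IIw_eq_psi_phi_comb:
  assumes "sets \<nu> = sets borel" and "0 < a" "0 < \<alpha>"
    and "(\<integral>\<^sup>+y. ennreal (psi_cut \<alpha> a y) \<partial>\<nu>) = ennreal G" "0 \<le> G"
    and "(\<integral>\<^sup>+y. ennreal (phi_cut \<alpha> a y) \<partial>\<nu>) = ennreal H" "0 \<le> H"
  shows "IIw \<alpha> \<nu> a a k x = ennreal (kendall_coeff G H k * psi_cut \<alpha> a x + G ^ k * phi_cut \<alpha> a x)"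
proof (induction k arbitrary: x)
  case 0
  show ?case
    by (auto simp: psi_cut_def phi_cut_def indicator_def)
next
  case (Suc k)
  have "(\<integral>\<^sup>+y. IIw \<alpha> \<nu> a a k y \<partial>kstep \<alpha> \<nu> x)
      = ennreal ((kendall_coeff G H k * G + G ^ k * H) * psi_cut \<alpha> a x + G ^ k * G * phi_cut \<alpha> a x)"
    using assms by (simp add: Suc.IH nn_integral_kstep_psi_phi_comb kendall_coeff_nonneg)
  moreover have "psi_cut \<alpha> a x = 0" "phi_cut \<alpha> a x = 0" if "\<not> x \<le> a"
    using that by (simp_all add: psi_cut_def phi_cut_def)
  ultimately show ?case
    by (cases "x \<le> a") (simp_all add: mult.commute)
qed

lemma II_eq_kendall_coeff:
  assumes "sets \<nu> = sets borel" and "0 < a" "0 < \<alpha>"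
    and "(\<integral>\<^sup>+y. ennreal (psi_cut \<alpha> a y) \<partial>\<nu>) = ennreal G" "0 \<le> G"
    and "(\<integral>\<^sup>+y. ennreal (phi_cut \<alpha> a y) \<partial>\<nu>) = ennreal H" "0 \<le> H"
  shows "II \<alpha> \<nu> (Suc k) a a = ennreal (kendall_coeff G H (Suc k))"
proof -
  have "II \<alpha> \<nu> (Suc k) a a = ennreal (kendall_coeff G H k) * ennreal G + ennreal (G ^ k) * ennreal H"
    using assms by (simp add: II_def IIw_eq_psi_phi_comb nn_integral_psi_phi_comb kendall_coeff_nonneg)
  also have "\<dots> = ennreal (kendall_coeff G H (Suc k))"
    using assms by (simp add: ennreal_mult_plus_mult kendall_coeff_nonneg)
  finally show ?thesis .
qed

theorem mainTheorem6:
  fixes \<alpha> a :: real and \<nu> :: "real measure" and n :: nat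
  assumes "\<alpha> > 0"
    and "prob_space \<nu>" and "sets \<nu> = sets borel"
    and "distr \<nu> borel uminus = \<nu>"
    and "emeasure \<nu> {0} = 0"
    and "a > 0" and "emeasure \<nu> {a} = 0"
    and "n \<ge> 1"
  shows "II \<alpha> \<nu> n a a =
    ennreal (GG \<alpha> \<nu> a ^ (n - 1) * (real n * HH \<alpha> \<nu> a + GG \<alpha> \<nu> a))"
proof -
  have finite: "finite_measure \<nu>"
    using assms(2) by (rule prob_space.finite_measure)
  have "emeasure \<nu> {- a} = 0"
    using emeasure_uminus_singleton[OF assms(4,3), of a] assms(7) by simp
  then have H: "(\<integral>\<^sup>+y. ennreal (phi_cut \<alpha> a y) \<partial>\<nu>) = ennreal (HH \<alpha> \<nu> a)" "0 \<le> HH \<alpha> \<nu> a"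
    using nn_integral_phi_cut_eq_HH HH_nonneg finite assms(3,6,1,7) by blast+
  have G: "(\<integral>\<^sup>+y. ennreal (psi_cut \<alpha> a y) \<partial>\<nu>) = ennreal (GG \<alpha> \<nu> a)" "0 \<le> GG \<alpha> \<nu> a"
    using nn_integral_psi_cut_eq_GG GG_nonneg finite assms(3,6,1) by blast+
  obtain k where n: "n = Suc k"
    using assms(8) by (cases n) simp_all
  have "II \<alpha> \<nu> (Suc k) a a = ennreal (GG \<alpha> \<nu> a ^ k * (real (Suc k) * HH \<alpha> \<nu> a + GG \<alpha> \<nu> a))"
    using II_eq_kendall_coeff[OF assms(3,6,1) G H] by (simp only: kendall_coeff_Suc_eq)
  then show ?thesis
    by (simp add: n)
qed

end
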